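(* Let $\Omega=\mathbb{T}^3$, $\delta>0$, $q\ge1$, $t>0$, and let $\mathbf{u}:[0,t]\times\Omega\to\mathbb{R}^3$ be sufficiently regular and periodic in $x$. Set $B=|\mathbb{D}(\mathbf{u})|^2+\delta^2$. Then $$\mathbb{J}:=-\int_0^t\int_\Omega\mathbf{u}_t\cdot\operatorname{div}\Big(B^{\frac{q-2}{2}}\mathbb{D}(\mathbf{u})\Big)_t\,dx\,ds\ \ge\ 0 .$$
   Context: $\mathbb{D}(\mathbf{u})=\frac12(\nabla\mathbf{u}+\nabla^t\mathbf{u})$ is the symmetric gradient, $|\mathbb{D}(\mathbf{u})|^2=\sum_{i,j}\mathbb{D}_{ij}(\mathbf{u})^2$, and the subscript $t$ denotes the time derivative. *)

theory Defs
  imports "HOL-Analysis.Analysis"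
begin

definition dirD :: "'a::real_normed_vector \<Rightarrow> ('a \<Rightarrow> real) \<Rightarrow> 'a \<Rightarrow> real" where
  "dirD v f z = deriv (\<lambda>h. f (z + h *\<^sub>R v)) 0"

fun iterD :: "'a::real_normed_vector list \<Rightarrow> ('a \<Rightarrow> real) \<Rightarrow> 'a \<Rightarrow> real" where
  "iterD [] f = f"
| "iterD (v # vs) f = dirD v (iterD vs f)"

definition smooth_fun :: "('a::euclidean_space \<Rightarrow> real) \<Rightarrow> bool" where
  "smooth_fun f \<longleftrightarrow> (\<forall>vs. set vs \<subseteq> Basis \<longrightarrow>
      continuous_on UNIV (iterD vs f) \<and>
      (\<forall>v\<in>Basis. \<forall>z. (\<lambda>h. iterD vs f (z + h *\<^sub>R v)) differentiable (at 0)))"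

text \<open>Space-time variable z = (s, x) with s time, x in R^3.\<close>
definition comp :: "(real \<Rightarrow> real^3 \<Rightarrow> real^3) \<Rightarrow> 3 \<Rightarrow> real \<times> (real^3) \<Rightarrow> real" where
  "comp u i z = u (fst z) (snd z) $ i"

definition dt :: "(real \<times> (real^3) \<Rightarrow> real) \<Rightarrow> real \<times> (real^3) \<Rightarrow> real" where
  "dt f = dirD (1, 0) f"

definition dx :: "3 \<Rightarrow> (real \<times> (real^3) \<Rightarrow> real) \<Rightarrow> real \<times> (real^3) \<Rightarrow> real" where
  "dx j f = dirD (0, axis j 1) f"

definition symgrad :: "(real \<Rightarrow> real^3 \<Rightarrow> real^3) \<Rightarrow> 3 \<Rightarrow> 3 \<Rightarrow> real \<times> (real^3) \<Rightarrow> real" where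
  "symgrad u i j z = (dx j (comp u i) z + dx i (comp u j) z) / 2"

definition Bfun :: "real \<Rightarrow> (real \<Rightarrow> real^3 \<Rightarrow> real^3) \<Rightarrow> real \<times> (real^3) \<Rightarrow> real" where
  "Bfun \<delta> u z = (\<Sum>i\<in>UNIV. \<Sum>j\<in>UNIV. (symgrad u i j z)^2) + \<delta>^2"

definition divflux :: "real \<Rightarrow> real \<Rightarrow> (real \<Rightarrow> real^3 \<Rightarrow> real^3) \<Rightarrow> 3 \<Rightarrow> real \<times> (real^3) \<Rightarrow> real" where
  "divflux \<delta> q u i z = (\<Sum>j\<in>UNIV. dx j (\<lambda>y. Bfun \<delta> u y powr ((q - 2) / 2) * symgrad u i j y) z)"

text \<open>The torus T^3 is realised as R^3 / Z^3 with fundamental cell [0,1]^3.\<close>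
definition JJ :: "real \<Rightarrow> real \<Rightarrow> real \<Rightarrow> (real \<Rightarrow> real^3 \<Rightarrow> real^3) \<Rightarrow> real" where
  "JJ \<delta> q t u = - integral (cbox (0, 0) (t, \<chi> i. 1))
      (\<lambda>z. \<Sum>i\<in>UNIV. dt (comp u i) z * dt (divflux \<delta> q u i) z)"

end

theory Submission
  imports Defs
begin

text \<open>Writing \<open>p = (q - 2) / 2\<close> and \<open>W = B\<^sup>p \<bbbD>(\<^bold>u)\<close>, the time derivative commutes with
  \<open>div\<close>, and integrating by parts in each \<open>x\<^sub>j\<close> over a period cell (no boundary terms, by
  periodicity) turns \<open>\<bbbJ>\<close> into \<open>\<integral>\<integral> \<Sum>\<^sub>i\<^sub>j \<partial>\<^sub>j\<partial>\<^sub>t u\<^sub>i \<partial>\<^sub>t W\<^sub>i\<^sub>j\<close>. As \<open>W\<close> is symmetric this is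
  \<open>\<integral>\<integral> \<partial>\<^sub>t\<bbbD>(\<^bold>u) : \<partial>\<^sub>t W\<close>, and pointwise
  \<open>\<partial>\<^sub>t\<bbbD> : \<partial>\<^sub>t W = B\<^sup>p\<^sup>-\<^sup>1 ((q - 2) (\<bbbD> : \<partial>\<^sub>t\<bbbD>)\<^sup>2 + B |\<partial>\<^sub>t\<bbbD>|\<^sup>2) \<ge> 0\<close>
  by Cauchy-Schwarz, since \<open>|\<bbbD>|\<^sup>2 \<le> B\<close> and \<open>q \<ge> 1\<close>.\<close>

definition has_dirD :: "'a::real_normed_vector \<Rightarrow> ('a \<Rightarrow> real) \<Rightarrow> ('a \<Rightarrow> real) \<Rightarrow> bool" where
  "has_dirD v f f' \<longleftrightarrow> (\<forall>z. ((\<lambda>h. f (z + h *\<^sub>R v)) has_real_derivative f' z) (at 0))"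

lemma has_dirD_imp_dirD_eq: "has_dirD v f f' \<Longrightarrow> dirD v f = f'"
  unfolding dirD_def has_dirD_def by (auto intro!: ext DERIV_imp_deriv)

lemma has_dirD_along_line:
  assumes "has_dirD v f f'"
  shows "((\<lambda>h. f (z + h *\<^sub>R v)) has_real_derivative f' (z + s *\<^sub>R v)) (at s)"
proof -
  have "((\<lambda>h. f ((z + s *\<^sub>R v) + h *\<^sub>R v)) has_real_derivative f' (z + s *\<^sub>R v)) (at 0)"
    using assms unfolding has_dirD_def by blast
  then have "((\<lambda>h. f (z + (h + s) *\<^sub>R v)) has_real_derivative f' (z + s *\<^sub>R v)) (at 0)"
    by (simp add: scaleR_add_left algebra_simps)
  then show ?thesis
    using DERIV_shift[of "\<lambda>h. f (z + h *\<^sub>R v)" _ 0 s] by simp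
qed

lemma has_dirD_const: "has_dirD v (\<lambda>_. c) (\<lambda>_. 0)"
  unfolding has_dirD_def by auto

lemma has_dirD_add:
  "has_dirD v f f' \<Longrightarrow> has_dirD v g g' \<Longrightarrow> has_dirD v (\<lambda>z. f z + g z) (\<lambda>z. f' z + g' z)"
  unfolding has_dirD_def by (auto intro!: derivative_eq_intros)

lemma has_dirD_mult:
  "has_dirD v f f' \<Longrightarrow> has_dirD v g g' \<Longrightarrow>
    has_dirD v (\<lambda>z. f z * g z) (\<lambda>z. f' z * g z + f z * g' z)"
  unfolding has_dirD_def by (auto intro!: derivative_eq_intros)

lemma has_dirD_divide_const: "has_dirD v f f' \<Longrightarrow> has_dirD v (\<lambda>z. f z / c) (\<lambda>z. f' z / c)"
  unfolding has_dirD_def by (auto intro: DERIV_cdivide)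

lemma has_dirD_power:
  "has_dirD v f f' \<Longrightarrow> has_dirD v (\<lambda>z. f z ^ n) (\<lambda>z. of_nat n * f z ^ (n - 1) * f' z)"
  unfolding has_dirD_def by (auto intro!: derivative_eq_intros)

lemma has_dirD_sum:
  "(\<And>i. i \<in> S \<Longrightarrow> has_dirD v (f i) (f' i)) \<Longrightarrow>
    has_dirD v (\<lambda>z. \<Sum>i\<in>S. f i z) (\<lambda>z. \<Sum>i\<in>S. f' i z)"
  unfolding has_dirD_def by (cases "finite S") (auto intro!: DERIV_sum)

lemma has_dirD_powr:
  "has_dirD v f f' \<Longrightarrow> (\<And>z. 0 < f z) \<Longrightarrow>
    has_dirD v (\<lambda>z. f z powr p) (\<lambda>z. p * f z powr (p - 1) * f' z)"
  unfolding has_dirD_def using DERIV_fun_powr by fastforce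

fun partially_C :: "nat \<Rightarrow> ('a::euclidean_space \<Rightarrow> real) \<Rightarrow> bool" where
  "partially_C 0 f \<longleftrightarrow> True"
| "partially_C (Suc n) f \<longleftrightarrow> continuous_on UNIV f \<and>
    (\<forall>v\<in>Basis. has_dirD v f (dirD v f) \<and> partially_C n (dirD v f))"

lemma partially_C_Suc_imp: "partially_C (Suc n) f \<Longrightarrow> partially_C n f"
  by (induction n arbitrary: f) auto

lemma partially_C_const: "partially_C n (\<lambda>_. c)"
proof (induction n arbitrary: c)
  case (Suc n)
  then show ?case
    using has_dirD_const has_dirD_imp_dirD_eq by (metis partially_C.simps(2) continuous_on_const)
qed simp

lemma partially_C_add: "partially_C n f \<Longrightarrow> partially_C n g \<Longrightarrow> partially_C n (\<lambda>z. f z + g z)"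
proof (induction n arbitrary: f g)
  case (Suc n)
  have "dirD v (\<lambda>z. f z + g z) = (\<lambda>z. dirD v f z + dirD v g z)"
    and "has_dirD v (\<lambda>z. f z + g z) (\<lambda>z. dirD v f z + dirD v g z)"
    if "v \<in> Basis" for v
    using Suc.prems that by (auto intro!: has_dirD_add has_dirD_imp_dirD_eq)
  then show ?case
    using Suc by (auto intro!: continuous_on_add)
qed simp

lemma partially_C_mult: "partially_C n f \<Longrightarrow> partially_C n g \<Longrightarrow> partially_C n (\<lambda>z. f z * g z)"
proof (induction n arbitrary: f g)
  case (Suc n)
  have "partially_C n f" "partially_C n g"
    using Suc.prems partially_C_Suc_imp by blast+
  moreover have "dirD v (\<lambda>z. f z * g z) = (\<lambda>z. dirD v f z * g z + f z * dirD v g z)"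
    and "has_dirD v (\<lambda>z. f z * g z) (\<lambda>z. dirD v f z * g z + f z * dirD v g z)"
    if "v \<in> Basis" for v
    using Suc.prems that by (auto intro!: has_dirD_mult has_dirD_imp_dirD_eq)
  ultimately show ?case
    using Suc by (auto intro!: continuous_on_mult partially_C_add)
qed simp

lemma partially_C_sum:
  "(\<And>i. i \<in> S \<Longrightarrow> partially_C n (f i)) \<Longrightarrow> partially_C n (\<lambda>z. \<Sum>i\<in>S. f i z)"
proof (induction S rule: infinite_finite_induct)
  case (insert x F)
  then show ?case using partially_C_add[of n "f x" "\<lambda>z. \<Sum>i\<in>F. f i z"] by simp
qed (simp_all add: partially_C_const)

lemma partially_C_powr:
  "partially_C n f \<Longrightarrow> (\<And>z. 0 < f z) \<Longrightarrow> partially_C n (\<lambda>z. f z powr p)"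
proof (induction n arbitrary: f p)
  case (Suc n)
  have "partially_C n f" "partially_C n (\<lambda>z. f z powr (p - 1))"
    using Suc partially_C_Suc_imp by blast+
  moreover have "dirD v (\<lambda>z. f z powr p) = (\<lambda>z. p * f z powr (p - 1) * dirD v f z)"
    and "has_dirD v (\<lambda>z. f z powr p) (\<lambda>z. p * f z powr (p - 1) * dirD v f z)"
    if "v \<in> Basis" for v
    using Suc.prems that by (auto intro!: has_dirD_powr has_dirD_imp_dirD_eq)
  moreover have "continuous_on UNIV (\<lambda>z. f z powr p)"
    using Suc.prems by (auto intro!: continuous_on_powr) (metis less_irrefl)
  ultimately show ?case
    using Suc.prems by (auto intro!: partially_C_mult partially_C_const)
qed simp

definition partially_smooth :: "('a::euclidean_space \<Rightarrow> real) \<Rightarrow> bool" where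
  "partially_smooth f \<longleftrightarrow> (\<forall>n. partially_C n f)"

lemma partially_smooth_imp_partially_C: "partially_smooth f \<Longrightarrow> partially_C n f"
  unfolding partially_smooth_def by blast

lemma partially_smooth_continuous: "partially_smooth f \<Longrightarrow> continuous_on UNIV f"
  using partially_smooth_imp_partially_C[of f 1] by simp

lemma partially_smooth_has_dirD: "partially_smooth f \<Longrightarrow> v \<in> Basis \<Longrightarrow> has_dirD v f (dirD v f)"
  using partially_smooth_imp_partially_C[of f 1] by simp

lemma partially_smooth_dirD: "partially_smooth f \<Longrightarrow> v \<in> Basis \<Longrightarrow> partially_smooth (dirD v f)"
  unfolding partially_smooth_def by (metis partially_C.simps(2))

lemma partially_smooth_const: "partially_smooth (\<lambda>_. c)"
  unfolding partially_smooth_def by (simp add: partially_C_const)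

lemma partially_smooth_add:
  "partially_smooth f \<Longrightarrow> partially_smooth g \<Longrightarrow> partially_smooth (\<lambda>z. f z + g z)"
  unfolding partially_smooth_def by (simp add: partially_C_add)

lemma partially_smooth_mult:
  "partially_smooth f \<Longrightarrow> partially_smooth g \<Longrightarrow> partially_smooth (\<lambda>z. f z * g z)"
  unfolding partially_smooth_def by (simp add: partially_C_mult)

lemma partially_smooth_divide_const: "partially_smooth f \<Longrightarrow> partially_smooth (\<lambda>z. f z / c)"
  using partially_smooth_mult[OF _ partially_smooth_const, of f "1 / c"] by simp

lemma partially_smooth_power: "partially_smooth f \<Longrightarrow> partially_smooth (\<lambda>z. f z ^ n)"
  by (induction n) (simp_all add: partially_smooth_const partially_smooth_mult)

lemma partially_smooth_sum:
  "(\<And>i. i \<in> S \<Longrightarrow> partially_smooth (f i)) \<Longrightarrow> partially_smooth (\<lambda>z. \<Sum>i\<in>S. f i z)"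
  unfolding partially_smooth_def by (simp add: partially_C_sum)

lemma partially_smooth_powr:
  "partially_smooth f \<Longrightarrow> (\<And>z. 0 < f z) \<Longrightarrow> partially_smooth (\<lambda>z. f z powr p)"
  unfolding partially_smooth_def by (simp add: partially_C_powr)

lemma smooth_fun_dirD: "smooth_fun f \<Longrightarrow> v \<in> Basis \<Longrightarrow> smooth_fun (dirD v f)"
proof -
  have iterD_snoc: "iterD (vs @ [v]) f = iterD vs (dirD v f)" for vs
    by (induction vs) auto
  assume "smooth_fun f" "v \<in> Basis"
  then show ?thesis
    unfolding smooth_fun_def using iterD_snoc
    by (metis Un_subset_iff empty_subsetI insert_subset list.set(1,2) set_append)
qed

lemma smooth_fun_imp_partially_smooth: "smooth_fun f \<Longrightarrow> partially_smooth f"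
proof -
  have "partially_C n f" if "smooth_fun f" for n
    using that
  proof (induction n arbitrary: f)
    case (Suc n)
    have "continuous_on UNIV f" "\<And>v z. v \<in> Basis \<Longrightarrow> (\<lambda>h. f (z + h *\<^sub>R v)) differentiable at 0"
      using spec[OF Suc.prems[unfolded smooth_fun_def], of "[]"] by auto
    moreover have "has_dirD v f (dirD v f)" if "v \<in> Basis" for v
      unfolding has_dirD_def dirD_def
      using calculation(2)[OF that] DERIV_deriv_iff_real_differentiable by blast
    ultimately show ?case
      using Suc.IH[OF smooth_fun_dirD[OF Suc.prems]] by auto
  qed simp
  then show "smooth_fun f \<Longrightarrow> partially_smooth f"
    unfolding partially_smooth_def by blast
qed

lemma integral_line_dirD:
  assumes "has_dirD b f f'" and "0 \<le> y"
  shows "f (z + y *\<^sub>R b) = f z + integral {0..y} (\<lambda>\<eta>. f' (z + \<eta> *\<^sub>R b))"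
proof -
  have "((\<lambda>\<eta>. f' (z + \<eta> *\<^sub>R b)) has_integral f (z + y *\<^sub>R b) - f (z + 0 *\<^sub>R b)) {0..y}"
    using assms
    by (intro fundamental_theorem_of_calculus)
      (auto intro!: has_field_derivative_at_within has_dirD_along_line
        simp: has_real_derivative_iff_has_vector_derivative[symmetric])
  then show ?thesis
    by (simp add: integral_unique)
qed

lemma has_real_derivative_integral_translate:
  fixes \<phi> :: "'b::euclidean_space \<Rightarrow> 'a::euclidean_space"
  assumes "has_dirD k G G'" "continuous_on UNIV G" "continuous_on UNIV G'" "continuous_on UNIV \<phi>"
  shows "((\<lambda>s. integral (cbox a b) (\<lambda>x. G (\<phi> x + s *\<^sub>R k))) has_real_derivative
      integral (cbox a b) (\<lambda>x. G' (\<phi> x + s *\<^sub>R k))) (at s)"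
proof -
  have "continuous_on UNIV (\<lambda>(s, x). G' (\<phi> x + s *\<^sub>R k))"
    unfolding case_prod_beta
    by (intro continuous_on_compose2[OF assms(3)] continuous_intros
        continuous_on_compose2[OF assms(4)]) auto
  moreover have "(\<lambda>x. G (\<phi> x + s *\<^sub>R k)) integrable_on cbox a b" for s
    by (intro integrable_continuous continuous_on_compose2[OF assms(2)] continuous_intros
        continuous_on_compose2[OF assms(4)]) auto
  ultimately show ?thesis
    using has_dirD_along_line[OF assms(1)]
    by (intro leibniz_rule_field_derivative[where U = UNIV, simplified])
      (auto intro: continuous_on_subset)
qed

text \<open>Differentiate \<open>f (z + s a + y b) = f (z + s a) + \<integral>\<^sub>0\<^sup>y \<partial>\<^sub>b f (z + s a + \<eta> b) d\<eta>\<close>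
  in \<open>s\<close> at \<open>0\<close>.\<close>

lemma dirD_line_integral_mixed:
  fixes f :: "'a::euclidean_space \<Rightarrow> real"
  assumes fa: "has_dirD a f fa" and fb: "has_dirD b f fb" and fab: "has_dirD a fb fab"
    and cont: "continuous_on UNIV fb" "continuous_on UNIV fab" and y: "0 \<le> y"
  shows "fa (z + y *\<^sub>R b) = fa z + integral {0..y} (\<lambda>\<eta>. fab (z + \<eta> *\<^sub>R b))"
proof -
  have "f (z + \<eta> *\<^sub>R b + s *\<^sub>R a) = f (z + s *\<^sub>R a + \<eta> *\<^sub>R b)" for s \<eta>
    by (simp add: algebra_simps)
  then have "((\<lambda>s. f (z + s *\<^sub>R a + y *\<^sub>R b)) has_real_derivative fa (z + y *\<^sub>R b)) (at 0)"
    using has_dirD_along_line[OF fa, of "z + y *\<^sub>R b" 0] by simp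
  moreover have "(\<lambda>s. f (z + s *\<^sub>R a + y *\<^sub>R b)) =
      (\<lambda>s. f (z + s *\<^sub>R a) + integral {0..y} (\<lambda>\<eta>. fb ((z + \<eta> *\<^sub>R b) + s *\<^sub>R a)))"
  proof
    show "f (z + s *\<^sub>R a + y *\<^sub>R b) =
        f (z + s *\<^sub>R a) + integral {0..y} (\<lambda>\<eta>. fb ((z + \<eta> *\<^sub>R b) + s *\<^sub>R a))" for s
      using integral_line_dirD[OF fb y, of "z + s *\<^sub>R a"] by (simp add: add_ac)
  qed
  then have "((\<lambda>s. f (z + s *\<^sub>R a + y *\<^sub>R b)) has_real_derivative
      fa z + integral {0..y} (\<lambda>\<eta>. fab (z + \<eta> *\<^sub>R b))) (at 0)"
    using DERIV_add[OF has_dirD_along_line[OF fa, of z 0]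
        has_real_derivative_integral_translate[OF fab cont, of "\<lambda>\<eta>. z + \<eta> *\<^sub>R b" 0 y 0]]
    by (simp add: continuous_intros)
  ultimately show ?thesis
    by (rule DERIV_unique)
qed

lemma dirD_commute:
  assumes f: "partially_C 3 f" and a: "a \<in> Basis" and b: "b \<in> Basis"
  shows "dirD b (dirD a f) = dirD a (dirD b f)"
proof
  fix z
  define fa fb fab where "fa = dirD a f" and "fb = dirD b f" and "fab = dirD a fb"
  have fa: "has_dirD a f fa" and fb: "has_dirD b f fb" and fab: "has_dirD a fb fab"
    and fba: "has_dirD b fa (dirD b fa)"
    and cont_fb: "continuous_on UNIV fb" and cont_fab: "continuous_on UNIV fab"
    using f a b by (simp_all add: fa_def fb_def fab_def numeral_3_eq_3 numeral_2_eq_2)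
  have "((\<lambda>y. fa (z + y *\<^sub>R b)) has_vector_derivative dirD b fa z) (at 0 within {0..1})"
    using has_dirD_along_line[OF fba, of z 0]
    by (simp add: has_real_derivative_iff_has_vector_derivative has_vector_derivative_at_within)
  moreover have "((\<lambda>y. fa (z + y *\<^sub>R b)) has_vector_derivative fab z) (at 0 within {0..1})"
  proof (rule has_vector_derivative_transform)
    show "fa (z + y *\<^sub>R b) = fa z + integral {0..y} (\<lambda>\<eta>. fab (z + \<eta> *\<^sub>R b))"
      if "y \<in> {0..1}" for y
      using dirD_line_integral_mixed[OF fa fb fab cont_fb cont_fab] that by simp
    have cont: "continuous_on {0..1} (\<lambda>\<eta>. fab (z + \<eta> *\<^sub>R b))"
      by (intro continuous_on_compose2[OF cont_fab] continuous_intros) auto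
    have "((\<lambda>y. integral {0..y} (\<lambda>\<eta>. fab (z + \<eta> *\<^sub>R b))) has_vector_derivative fab z)
        (at 0 within {0..1})"
      using integral_has_vector_derivative[OF cont, of 0] by simp
    then show "((\<lambda>y. fa z + integral {0..y} (\<lambda>\<eta>. fab (z + \<eta> *\<^sub>R b))) has_vector_derivative fab z)
        (at 0 within {0..1})"
      using has_vector_derivative_add[OF has_vector_derivative_const] by fastforce
  qed simp
  ultimately have "dirD b fa z = fab z"
    using vector_derivative_unique_within_closed_interval[of 0 1 0] by auto
  then show "dirD b (dirD a f) z = dirD a (dirD b f) z"
    by (simp add: fa_def fab_def fb_def)
qed

lemma integrable_continuous_UNIV:
  fixes f :: "'a::euclidean_space \<Rightarrow> 'b::banach"
  shows "continuous_on UNIV f \<Longrightarrow> f integrable_on cbox a b"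
  by (rule integrable_continuous[OF continuous_on_subset]) auto

lemma cbox_split_unit:
  fixes a b :: "'a::euclidean_space"
  assumes k: "k \<in> Basis" and b: "b \<bullet> k = a \<bullet> k + 1" and d: "0 \<le> d" "d \<le> 1"
  shows "cbox a b \<inter> {x. x \<bullet> k \<le> a \<bullet> k + d} = cbox a (b - (1 - d) *\<^sub>R k)"
    and "cbox a b \<inter> {x. a \<bullet> k + d \<le> x \<bullet> k} = cbox (a + d *\<^sub>R k) b"
proof -
  have "(\<Sum>i\<in>Basis. (if i = k then min (b \<bullet> k) (a \<bullet> k + d) else b \<bullet> i) *\<^sub>R i) = b - (1 - d) *\<^sub>R k"
  proof (rule euclidean_eqI)
    fix j :: 'a assume "j \<in> Basis"
    then show "(\<Sum>i\<in>Basis. (if i = k then min (b \<bullet> k) (a \<bullet> k + d) else b \<bullet> i) *\<^sub>R i) \<bullet> j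
        = (b - (1 - d) *\<^sub>R k) \<bullet> j"
      using k b d by (cases "j = k") (simp_all add: inner_diff_left inner_Basis)
  qed
  moreover have "(\<Sum>i\<in>Basis. (if i = k then max (a \<bullet> k) (a \<bullet> k + d) else a \<bullet> i) *\<^sub>R i) = a + d *\<^sub>R k"
  proof (rule euclidean_eqI)
    fix j :: 'a assume "j \<in> Basis"
    then show "(\<Sum>i\<in>Basis. (if i = k then max (a \<bullet> k) (a \<bullet> k + d) else a \<bullet> i) *\<^sub>R i) \<bullet> j
        = (a + d *\<^sub>R k) \<bullet> j"
      using k d by (cases "j = k") (simp_all add: inner_add_left inner_Basis)
  qed
  ultimately show "cbox a b \<inter> {x. x \<bullet> k \<le> a \<bullet> k + d} = cbox a (b - (1 - d) *\<^sub>R k)"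
    and "cbox a b \<inter> {x. a \<bullet> k + d \<le> x \<bullet> k} = cbox (a + d *\<^sub>R k) b"
    using interval_split[OF k, of a b "a \<bullet> k + d"] by simp_all
qed

text \<open>Translating by \<open>d k\<close> cuts the box into two slabs that are exchanged, one of them
  after a further translation by the period \<open>k\<close>.\<close>

lemma integral_translate_periodic:
  fixes F :: "'a::euclidean_space \<Rightarrow> real"
  assumes cont: "continuous_on UNIV F" and k: "k \<in> Basis" and per: "\<And>x. F (x + k) = F x"
    and b: "b \<bullet> k = a \<bullet> k + 1" and d: "0 \<le> d" "d \<le> 1"
  shows "integral (cbox a b) (\<lambda>x. F (x + d *\<^sub>R k)) = integral (cbox a b) F"
proof -
  have cont_shift: "continuous_on UNIV (\<lambda>x. F (x + d *\<^sub>R k))"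
    by (intro continuous_on_compose2[OF cont] continuous_intros) auto
  have shift_per: "F (x + d *\<^sub>R k) = F (x + (d - 1) *\<^sub>R k)" for x
    using per[of "x + (d - 1) *\<^sub>R k"] by (simp add: algebra_simps)
  have lower: "cbox a b \<inter> {x. x \<bullet> k \<le> a \<bullet> k + (1 - d)} = cbox a (b - d *\<^sub>R k)"
    and upper: "cbox a b \<inter> {x. a \<bullet> k + (1 - d) \<le> x \<bullet> k} = cbox (a + (1 - d) *\<^sub>R k) b"
    using cbox_split_unit[OF k b, of "1 - d"] d by simp_all
  have "integral (cbox a b) (\<lambda>x. F (x + d *\<^sub>R k)) =
      integral (cbox a (b - d *\<^sub>R k)) (\<lambda>x. F (x + d *\<^sub>R k)) +
      integral (cbox (a + (1 - d) *\<^sub>R k) b) (\<lambda>x. F (x + (d - 1) *\<^sub>R k))"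
    using integral_split[OF integrable_continuous_UNIV[OF cont_shift] k, of a b "a \<bullet> k + (1 - d)"]
    unfolding lower upper shift_per .
  also have "\<dots> = integral (cbox (a + d *\<^sub>R k) b) F + integral (cbox a (b - (1 - d) *\<^sub>R k)) F"
  proof -
    have e: "a + d *\<^sub>R k - d *\<^sub>R k = a" "a - (d - 1) *\<^sub>R k = a + (1 - d) *\<^sub>R k"
      "b - (1 - d) *\<^sub>R k - (d - 1) *\<^sub>R k = b"
      by (simp_all add: algebra_simps)
    show ?thesis
      using integral_shift_cbox[of "a + d *\<^sub>R k" "d *\<^sub>R k" b F, unfolded e(1)]
        integral_shift_cbox[of a "(d - 1) *\<^sub>R k" "b - (1 - d) *\<^sub>R k" F, unfolded e(2,3)]
      by (simp only:)
  qed
  also have "\<dots> = integral (cbox a b) F"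
    using integral_split[OF integrable_continuous_UNIV[OF cont] k, of a b "a \<bullet> k + d"]
    unfolding cbox_split_unit[OF k b d] by simp
  finally show ?thesis .
qed

text \<open>\<open>s \<mapsto> \<integral> G (x + s k) dx\<close> is constant by periodicity, and its derivative at \<open>0\<close> is
  \<open>\<integral> \<partial>\<^sub>k G\<close>.\<close>

lemma integral_dirD_periodic_eq_0:
  fixes G :: "'a::euclidean_space \<Rightarrow> real"
  assumes G: "has_dirD k G G'" "continuous_on UNIV G" "continuous_on UNIV G'"
    and k: "k \<in> Basis" and per: "\<And>z. G (z + k) = G z" and b: "b \<bullet> k = a \<bullet> k + 1"
  shows "integral (cbox a b) G' = 0"
proof -
  define \<Phi> where "\<Phi> s = integral (cbox a b) (\<lambda>x. G (x + s *\<^sub>R k))" for s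
  have "(\<Phi> has_real_derivative integral (cbox a b) G') (at 0)"
    unfolding \<Phi>_def using has_real_derivative_integral_translate[OF G, of id a b 0] by simp
  then have "(\<Phi> has_vector_derivative integral (cbox a b) G') (at 0 within {0..1})"
    by (simp add: has_real_derivative_iff_has_vector_derivative has_vector_derivative_at_within)
  moreover have "(\<Phi> has_vector_derivative 0) (at 0 within {0..1})"
  proof (rule has_vector_derivative_transform[OF _ _ has_vector_derivative_const])
    show "\<Phi> s = \<Phi> 0" if "s \<in> {0..1}" for s
      using integral_translate_periodic[OF G(2) k per b, of s] that by (simp add: \<Phi>_def)
  qed simp
  ultimately show ?thesis
    using vector_derivative_unique_within_closed_interval[of 0 1 0] by auto
qed

lemma integral_by_parts_periodic:
  fixes F G :: "'a::euclidean_space \<Rightarrow> real"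
  assumes F: "partially_C 2 F" and G: "partially_C 2 G" and k: "k \<in> Basis"
    and per: "\<And>z. F (z + k) = F z" "\<And>z. G (z + k) = G z" and b: "b \<bullet> k = a \<bullet> k + 1"
  shows "integral (cbox a b) (\<lambda>z. F z * dirD k G z) = - integral (cbox a b) (\<lambda>z. dirD k F z * G z)"
proof -
  have cont: "continuous_on UNIV F" "continuous_on UNIV G"
    "continuous_on UNIV (dirD k F)" "continuous_on UNIV (dirD k G)"
    and deriv: "has_dirD k F (dirD k F)" "has_dirD k G (dirD k G)"
    using F G k by (simp_all add: numeral_2_eq_2)
  have cont_FG: "continuous_on UNIV (\<lambda>z. F z * G z)"
    and cont_F'G: "continuous_on UNIV (\<lambda>z. dirD k F z * G z)"
    and cont_FG': "continuous_on UNIV (\<lambda>z. F z * dirD k G z)"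
    using cont by (auto intro: continuous_on_mult)
  have "integral (cbox a b) (\<lambda>z. dirD k F z * G z + F z * dirD k G z) = 0"
    using per
    by (intro integral_dirD_periodic_eq_0[OF has_dirD_mult[OF deriv] cont_FG _ k _ b]
        continuous_on_add cont_F'G cont_FG') simp_all
  moreover have "integral (cbox a b) (\<lambda>z. dirD k F z * G z + F z * dirD k G z) =
      integral (cbox a b) (\<lambda>z. dirD k F z * G z) + integral (cbox a b) (\<lambda>z. F z * dirD k G z)"
    by (intro integral_add integrable_continuous_UNIV cont_F'G cont_FG')
  ultimately show ?thesis
    by linarith
qed

lemma sum_sum_mult_symmetric:
  fixes X V :: "'i \<Rightarrow> 'i \<Rightarrow> real"
  assumes "\<And>i j. V i j = V j i"
  shows "(\<Sum>i\<in>I. \<Sum>j\<in>I. X i j * V i j) = (\<Sum>i\<in>I. \<Sum>j\<in>I. (X i j + X j i) / 2 * V i j)"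
proof -
  have "(\<Sum>i\<in>I. \<Sum>j\<in>I. X j i * V i j) = (\<Sum>i\<in>I. \<Sum>j\<in>I. X i j * V i j)"
    using sum.swap[of "\<lambda>i j. X j i * V i j" I I] assms by simp
  moreover have "(\<Sum>i\<in>I. \<Sum>j\<in>I. (X i j + X j i) / 2 * V i j) =
      ((\<Sum>i\<in>I. \<Sum>j\<in>I. X i j * V i j) + (\<Sum>i\<in>I. \<Sum>j\<in>I. X j i * V i j)) / 2"
    by (simp add: sum.distrib sum_divide_distrib[symmetric] distrib_right)
  ultimately show ?thesis
    by simp
qed

lemma powr_flux_derivative_inner_nonneg:
  fixes D E :: "'i \<Rightarrow> 'j \<Rightarrow> real"
  assumes D: "(\<Sum>i\<in>I. \<Sum>j\<in>J. (D i j)\<^sup>2) \<le> B" and B: "0 < B" and q: "1 \<le> q"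
  shows "0 \<le> (\<Sum>i\<in>I. \<Sum>j\<in>J. E i j *
      ((q - 2) / 2 * B powr ((q - 2) / 2 - 1) * (\<Sum>k\<in>I. \<Sum>l\<in>J. 2 * D k l * E k l) * D i j
        + B powr ((q - 2) / 2) * E i j))"
proof -
  define S N where "S = (\<Sum>i\<in>I. \<Sum>j\<in>J. D i j * E i j)" and "N = (\<Sum>i\<in>I. \<Sum>j\<in>J. (E i j)\<^sup>2)"
  have "S\<^sup>2 \<le> (\<Sum>i\<in>I. \<Sum>j\<in>J. (D i j)\<^sup>2) * N"
    using Cauchy_Schwarz_ineq_sum[of "\<lambda>x. D (fst x) (snd x)" "\<lambda>x. E (fst x) (snd x)" "I \<times> J"]
    by (simp add: S_def N_def sum.cartesian_product case_prod_beta)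
  also have "\<dots> \<le> B * N"
    using D by (rule mult_right_mono) (simp add: N_def sum_nonneg)
  moreover have "- (S\<^sup>2) \<le> (q - 2) * S\<^sup>2"
    using q mult_right_mono[of "-1" "q - 2" "S\<^sup>2"] by simp
  ultimately have "0 \<le> B powr ((q - 2) / 2 - 1) * ((q - 2) * S\<^sup>2 + B * N)"
    by simp
  moreover have sum_DE: "(\<Sum>k\<in>I. \<Sum>l\<in>J. 2 * D k l * E k l) = 2 * S"
    by (simp add: S_def sum_distrib_left mult.assoc)
  have linear: "(\<Sum>i\<in>I. \<Sum>j\<in>J. E i j * (c * T * D i j + P * E i j)) = c * T * S + P * N"
    for c T P
    unfolding S_def N_def by (simp add: sum.distrib sum_distrib_left algebra_simps power2_eq_square)
  have "B powr ((q - 2) / 2) = B powr ((q - 2) / 2 - 1) * B"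
    using B by (simp add: powr_diff)
  then have "(q - 2) / 2 * B powr ((q - 2) / 2 - 1) * (2 * S) * S + B powr ((q - 2) / 2) * N =
      B powr ((q - 2) / 2 - 1) * ((q - 2) * S\<^sup>2 + B * N)"
    by (simp add: field_simps power2_eq_square)
  ultimately show ?thesis
    unfolding sum_DE linear by simp
qed

lemma integral_sum_sum:
  fixes f :: "'i \<Rightarrow> 'j \<Rightarrow> 'a::euclidean_space \<Rightarrow> real"
  assumes "finite I" "finite J" "\<And>i j. i \<in> I \<Longrightarrow> j \<in> J \<Longrightarrow> f i j integrable_on S"
  shows "integral S (\<lambda>z. \<Sum>i\<in>I. \<Sum>j\<in>J. f i j z) = (\<Sum>i\<in>I. \<Sum>j\<in>J. integral S (f i j))"
  using assms by (simp add: integral_sum integrable_sum)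

lemma dirD_periodic:
  assumes "\<And>z. f (z + k) = f z"
  shows "dirD v f (z + k) = dirD v f z"
proof -
  have "f (z + k + h *\<^sub>R v) = f (z + h *\<^sub>R v)" for h
    using assms[of "z + h *\<^sub>R v"] by (simp add: add_ac)
  then show ?thesis
    by (simp add: dirD_def)
qed

lemma time_in_Basis: "(1, 0) \<in> (Basis :: (real \<times> (real^3)) set)"
  by (simp add: Basis_prod_def)

lemma space_in_Basis: "(0, axis j 1) \<in> (Basis :: (real \<times> (real^3)) set)"
  by (simp add: Basis_prod_def)

lemma partially_smooth_dt: "partially_smooth f \<Longrightarrow> partially_smooth (dt f)"
  unfolding dt_def by (rule partially_smooth_dirD[OF _ time_in_Basis])

lemma partially_smooth_dx: "partially_smooth f \<Longrightarrow> partially_smooth (dx j f)"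
  unfolding dx_def by (rule partially_smooth_dirD[OF _ space_in_Basis])

lemma partially_smooth_has_dirD_dt: "partially_smooth f \<Longrightarrow> has_dirD (1, 0) f (dt f)"
  unfolding dt_def by (rule partially_smooth_has_dirD[OF _ time_in_Basis])

lemma has_dirD_imp_dt_eq: "has_dirD (1, 0) f f' \<Longrightarrow> dt f = f'"
  unfolding dt_def by (rule has_dirD_imp_dirD_eq)

lemma dt_dx_commute: "partially_smooth f \<Longrightarrow> dt (dx j f) = dx j (dt f)"
  unfolding dt_def dx_def
  by (rule dirD_commute[OF partially_smooth_imp_partially_C space_in_Basis time_in_Basis])

definition flux :: "real \<Rightarrow> real \<Rightarrow> (real \<Rightarrow> real^3 \<Rightarrow> real^3) \<Rightarrow> 3 \<Rightarrow> 3 \<Rightarrow> real \<times> (real^3) \<Rightarrow> real"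
  where "flux \<delta> q u i j = (\<lambda>z. Bfun \<delta> u z powr ((q - 2) / 2) * symgrad u i j z)"

lemma divflux_eq: "divflux \<delta> q u i = (\<lambda>z. \<Sum>j\<in>UNIV. dx j (flux \<delta> q u i j) z)"
  by (rule ext) (simp add: divflux_def flux_def)

lemma symgrad_sym: "symgrad u i j = symgrad u j i"
  by (simp add: symgrad_def[abs_def] add.commute)

lemma flux_sym: "flux \<delta> q u i j = flux \<delta> q u j i"
  by (simp add: flux_def symgrad_sym)

lemma symgrad_sq_le_Bfun: "(\<Sum>i\<in>UNIV. \<Sum>j\<in>UNIV. (symgrad u i j z)\<^sup>2) \<le> Bfun \<delta> u z"
  by (simp add: Bfun_def)

lemma Bfun_pos: "\<delta> \<noteq> 0 \<Longrightarrow> 0 < Bfun \<delta> u z"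
  unfolding Bfun_def by (intro add_nonneg_pos sum_nonneg) auto

locale smooth_periodic_field =
  fixes u :: "real \<Rightarrow> real^3 \<Rightarrow> real^3"
  assumes smooth: "\<And>i. smooth_fun (comp u i)"
    and periodic: "\<And>s x k. u s (x + axis k 1) = u s x"
begin

lemma comp_smooth: "partially_smooth (comp u i)"
  by (rule smooth_fun_imp_partially_smooth[OF smooth])

lemma comp_periodic: "comp u i (z + (0, axis k 1)) = comp u i z"
  by (cases z) (simp add: comp_def periodic)

lemma symgrad_smooth: "partially_smooth (symgrad u i j)"
  unfolding symgrad_def[abs_def]
  by (intro partially_smooth_divide_const partially_smooth_add partially_smooth_dx comp_smooth)

lemma symgrad_periodic: "symgrad u i j (z + (0, axis k 1)) = symgrad u i j z"
  by (simp add: symgrad_def dx_def dirD_periodic comp_periodic)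

lemma Bfun_smooth: "partially_smooth (Bfun \<delta> u)"
  unfolding Bfun_def[abs_def]
  by (intro partially_smooth_add partially_smooth_sum partially_smooth_power
      partially_smooth_const symgrad_smooth)

lemma Bfun_periodic: "Bfun \<delta> u (z + (0, axis k 1)) = Bfun \<delta> u z"
  by (simp add: Bfun_def symgrad_periodic)

lemma flux_smooth: "\<delta> \<noteq> 0 \<Longrightarrow> partially_smooth (flux \<delta> q u i j)"
  unfolding flux_def
  by (intro partially_smooth_mult partially_smooth_powr Bfun_smooth symgrad_smooth Bfun_pos)

lemma flux_periodic: "flux \<delta> q u i j (z + (0, axis k 1)) = flux \<delta> q u i j z"
  by (simp add: flux_def Bfun_periodic symgrad_periodic)

lemma dt_symgrad: "dt (symgrad u i j) z = (dx j (dt (comp u i)) z + dx i (dt (comp u j)) z) / 2"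
proof -
  have "has_dirD (1, 0) (symgrad u i j) (\<lambda>z. (dt (dx j (comp u i)) z + dt (dx i (comp u j)) z) / 2)"
    unfolding symgrad_def[abs_def]
    by (intro has_dirD_divide_const has_dirD_add partially_smooth_has_dirD_dt
        partially_smooth_dx comp_smooth)
  then show ?thesis
    by (simp add: has_dirD_imp_dt_eq dt_dx_commute[OF comp_smooth])
qed

lemma dt_Bfun: "dt (Bfun \<delta> u) z = (\<Sum>k\<in>UNIV. \<Sum>l\<in>UNIV. 2 * symgrad u k l z * dt (symgrad u k l) z)"
proof -
  have "has_dirD (1, 0) (Bfun \<delta> u)
      (\<lambda>z. (\<Sum>k\<in>UNIV. \<Sum>l\<in>UNIV. of_nat 2 * symgrad u k l z ^ (2 - 1) * dt (symgrad u k l) z) + 0)"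
    unfolding Bfun_def[abs_def]
    by (intro has_dirD_add has_dirD_sum has_dirD_power has_dirD_const
        partially_smooth_has_dirD_dt symgrad_smooth)
  then show ?thesis
    by (simp add: has_dirD_imp_dt_eq)
qed

lemma dt_flux:
  assumes "\<delta> \<noteq> 0"
  shows "dt (flux \<delta> q u i j) z =
    (q - 2) / 2 * Bfun \<delta> u z powr ((q - 2) / 2 - 1) * dt (Bfun \<delta> u) z * symgrad u i j z
    + Bfun \<delta> u z powr ((q - 2) / 2) * dt (symgrad u i j) z"
proof -
  have "has_dirD (1, 0) (flux \<delta> q u i j) (\<lambda>z.
      (q - 2) / 2 * Bfun \<delta> u z powr ((q - 2) / 2 - 1) * dt (Bfun \<delta> u) z * symgrad u i j z
      + Bfun \<delta> u z powr ((q - 2) / 2) * dt (symgrad u i j) z)"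
    unfolding flux_def
    by (intro has_dirD_mult has_dirD_powr partially_smooth_has_dirD_dt Bfun_smooth symgrad_smooth
        Bfun_pos assms)
  then show ?thesis
    by (simp add: has_dirD_imp_dt_eq)
qed

lemma dt_symgrad_dt_flux_nonneg:
  assumes "\<delta> \<noteq> 0" and "1 \<le> q"
  shows "0 \<le> (\<Sum>i\<in>UNIV. \<Sum>j\<in>UNIV. dt (symgrad u i j) z * dt (flux \<delta> q u i j) z)"
  using powr_flux_derivative_inner_nonneg[where I = UNIV and J = UNIV and D = "\<lambda>i j. symgrad u i j z"
      and B = "Bfun \<delta> u z" and E = "\<lambda>i j. dt (symgrad u i j) z"]
    assms Bfun_pos symgrad_sq_le_Bfun
  by (simp add: dt_flux dt_Bfun)

lemma dt_divflux:
  assumes "\<delta> \<noteq> 0"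
  shows "dt (divflux \<delta> q u i) z = (\<Sum>j\<in>UNIV. dx j (dt (flux \<delta> q u i j)) z)"
proof -
  have "has_dirD (1, 0) (divflux \<delta> q u i) (\<lambda>z. \<Sum>j\<in>UNIV. dt (dx j (flux \<delta> q u i j)) z)"
    unfolding divflux_eq
    by (intro has_dirD_sum partially_smooth_has_dirD_dt partially_smooth_dx flux_smooth assms)
  then show ?thesis
    by (simp add: has_dirD_imp_dt_eq dt_dx_commute flux_smooth assms)
qed

lemma sum_dx_dt_comp_mult_dt_flux:
  "(\<Sum>i\<in>UNIV. \<Sum>j\<in>UNIV. dx j (dt (comp u i)) z * dt (flux \<delta> q u i j) z) =
    (\<Sum>i\<in>UNIV. \<Sum>j\<in>UNIV. dt (symgrad u i j) z * dt (flux \<delta> q u i j) z)"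
  unfolding dt_symgrad by (rule sum_sum_mult_symmetric) (simp add: flux_sym)

lemma JJ_eq_integral_dt_symgrad_dt_flux:
  assumes "\<delta> \<noteq> 0"
  shows "JJ \<delta> q t u = integral (cbox (0, 0) (t, \<chi> i. 1))
    (\<lambda>z. \<Sum>i\<in>UNIV. \<Sum>j\<in>UNIV. dt (symgrad u i j) z * dt (flux \<delta> q u i j) z)"
proof -
  define \<Omega> where "\<Omega> = cbox (0::real, 0::real^3) (t, \<chi> i. 1)"
  define A V where "A i = dt (comp u i)" and "V i j = dt (flux \<delta> q u i j)" for i j
  have A: "partially_smooth (A i)" and V: "partially_smooth (V i j)" for i j
    unfolding A_def V_def by (intro partially_smooth_dt comp_smooth flux_smooth assms)+
  have int: "(\<lambda>z. f z * g z) integrable_on \<Omega>" if "partially_smooth f" "partially_smooth g" for f g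
    unfolding \<Omega>_def using that
    by (intro integrable_continuous_UNIV partially_smooth_continuous partially_smooth_mult)
  have unit_width: "(t, (\<chi> i. 1) :: real^3) \<bullet> (0, axis j 1) = (0, 0) \<bullet> (0, axis j 1) + 1" for j
    by (simp add: inner_axis)
  have by_parts: "integral \<Omega> (\<lambda>z. A i z * dx j (V i j) z) = - integral \<Omega> (\<lambda>z. dx j (A i) z * V i j z)"
    for i j
    unfolding \<Omega>_def dx_def
    by (intro integral_by_parts_periodic partially_smooth_imp_partially_C A V space_in_Basis
        unit_width)
      (simp_all add: A_def V_def dt_def dirD_periodic comp_periodic flux_periodic)
  have "JJ \<delta> q t u = - integral \<Omega> (\<lambda>z. \<Sum>i\<in>UNIV. \<Sum>j\<in>UNIV. A i z * dx j (V i j) z)"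
    by (simp add: JJ_def \<Omega>_def A_def V_def dt_divflux assms sum_distrib_left)
  also have "\<dots> = (\<Sum>i\<in>UNIV. \<Sum>j\<in>UNIV. integral \<Omega> (\<lambda>z. dx j (A i) z * V i j z))"
    by (simp add: integral_sum_sum int A V partially_smooth_dx by_parts sum_negf)
  also have "\<dots> = integral \<Omega> (\<lambda>z. \<Sum>i\<in>UNIV. \<Sum>j\<in>UNIV. dx j (A i) z * V i j z)"
    by (simp add: integral_sum_sum int A V partially_smooth_dx)
  finally show ?thesis
    unfolding \<Omega>_def A_def V_def sum_dx_dt_comp_mult_dt_flux .
qed

end

theorem lemma4p1:
  fixes u :: "real \<Rightarrow> real^3 \<Rightarrow> real^3" and \<delta> q t :: real
  assumes "\<delta> > 0" and "q \<ge> 1" and "t > 0"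
    and "\<And>i. smooth_fun (comp u i)"
    and "\<And>s x k. u s (x + axis k 1) = u s x"
  shows "JJ \<delta> q t u \<ge> 0"
proof -
  interpret smooth_periodic_field u
    using assms(4,5) by unfold_locales
  have "\<delta> \<noteq> 0"
    using assms(1) by simp
  have "0 \<le> integral (cbox (0, 0) (t, \<chi> i. 1))
      (\<lambda>z. \<Sum>i\<in>UNIV. \<Sum>j\<in>UNIV. dt (symgrad u i j) z * dt (flux \<delta> q u i j) z)"
    using \<open>\<delta> \<noteq> 0\<close> assms(2)
    by (intro integral_nonneg integrable_continuous_UNIV partially_smooth_continuous
        partially_smooth_sum partially_smooth_mult partially_smooth_dt symgrad_smooth flux_smooth
        dt_symgrad_dt_flux_nonneg)
  then show ?thesis
    using JJ_eq_integral_dt_symgrad_dt_flux[OF \<open>\<delta> \<noteq> 0\<close>] by simp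
qed

end
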